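(* Let $\mathcal{T}$ be a finite total order, $\mathcal{G}$ a finite grid poset, and $S\subseteq\mathcal{T}\times\mathcal{G}$ a spread. If $x\in\operatorname{cover}S$, then $\pi_0(x)\in\pi_0\big(\min S\cup(\max S+e_0)\big)$. In particular the aligned subgrid $\pi_0\big(\min S\cup(\max S+e_0)\big)\times\mathcal{G}$ contains $\min S$ and $\operatorname{cover}S$.
   Context: Identify $\mathcal{T}=[m_0]=\{0<\dots<m_0-1\}$ and $\mathcal{G}=[m_1]\times\cdots\times[m_n]$, with product order on $\mathcal{T}\times\mathcal{G}$; $\pi_0:\mathcal{T}\times\mathcal{G}\to\mathcal{T}$ is the first projection. For $x\in\mathcal{T}\times\mathcal{G}$, $x+e_0$ is $x$ with its $0$-th coordinate replaced by $\min(m_0-1,\pi_0(x)+1)$, and $X+e_0=\{x+e_0:x\in X\}$. $\uparrow X=\{p:\exists x\in X,x\le p\}$, $\operatorname{cover}X=\min(\uparrow X\setminus X)$. A spread is a nonempty subset that is convex ($s\le p\le s'$ with $s,s'\in S$ implies $p\in S$) and connected by zigzags of comparable elements. *)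

theory Defs
  imports Main
begin

text \<open>Points of T x G = [m 0] x [m 1] x ... x [m n] are functions nat => nat,
  coordinate 0 is the T-coordinate, coordinates 1..n the grid coordinates,
  all coordinates beyond n are 0. The order is the pointwise (product) order,
  which is the built-in order on functions.\<close>

definition grid :: "nat \<Rightarrow> (nat \<Rightarrow> nat) \<Rightarrow> (nat \<Rightarrow> nat) set" where
  "grid n m = {x. \<forall>i. (i \<le> n \<longrightarrow> x i < m i) \<and> (n < i \<longrightarrow> x i = 0)}"

definition upset :: "(nat \<Rightarrow> nat) set \<Rightarrow> (nat \<Rightarrow> nat) set \<Rightarrow> (nat \<Rightarrow> nat) set" where
  "upset P X = {p \<in> P. \<exists>x\<in>X. x \<le> p}"

definition minimals :: "(nat \<Rightarrow> nat) set \<Rightarrow> (nat \<Rightarrow> nat) set" where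
  "minimals X = {x \<in> X. \<forall>y\<in>X. y \<le> x \<longrightarrow> y = x}"

definition maximals :: "(nat \<Rightarrow> nat) set \<Rightarrow> (nat \<Rightarrow> nat) set" where
  "maximals X = {x \<in> X. \<forall>y\<in>X. x \<le> y \<longrightarrow> y = x}"

definition cover :: "(nat \<Rightarrow> nat) set \<Rightarrow> (nat \<Rightarrow> nat) set \<Rightarrow> (nat \<Rightarrow> nat) set" where
  "cover P X = minimals (upset P X - X)"

definition convex_in :: "(nat \<Rightarrow> nat) set \<Rightarrow> (nat \<Rightarrow> nat) set \<Rightarrow> bool" where
  "convex_in P S \<longleftrightarrow> (\<forall>s\<in>S. \<forall>s'\<in>S. \<forall>p\<in>P. s \<le> p \<and> p \<le> s' \<longrightarrow> p \<in> S)"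

definition comparable_in :: "(nat \<Rightarrow> nat) set \<Rightarrow> (nat \<Rightarrow> nat) \<Rightarrow> (nat \<Rightarrow> nat) \<Rightarrow> bool" where
  "comparable_in S a b \<longleftrightarrow> a \<in> S \<and> b \<in> S \<and> (a \<le> b \<or> b \<le> a)"

definition zigzag_connected :: "(nat \<Rightarrow> nat) set \<Rightarrow> bool" where
  "zigzag_connected S \<longleftrightarrow> (\<forall>a\<in>S. \<forall>b\<in>S. (comparable_in S)\<^sup>*\<^sup>* a b)"

definition spread :: "(nat \<Rightarrow> nat) set \<Rightarrow> (nat \<Rightarrow> nat) set \<Rightarrow> bool" where
  "spread P S \<longleftrightarrow> S \<noteq> {} \<and> S \<subseteq> P \<and> convex_in P S \<and> zigzag_connected S"

definition plus_e0 :: "(nat \<Rightarrow> nat) \<Rightarrow> (nat \<Rightarrow> nat) \<Rightarrow> (nat \<Rightarrow> nat)" where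
  "plus_e0 m x = x(0 := min (m 0 - 1) (x 0 + 1))"

end

theory Submission
  imports Defs "HOL-Library.FuncSet"
begin

text \<open>Let x be in the cover of S and s \<le> x with s \<in> S. If some such s lies strictly
  below x in the T-coordinate, then lowering that coordinate of x by one gives a point
  between s and x, which lies in S by minimality of x; a maximal element w of S above it
  cannot reach the T-coordinate of x, since otherwise convexity would put x into S, so
  w + e_0 has the T-coordinate of x. Otherwise every element of S below x, in particular
  a minimal one, has the T-coordinate of x.\<close>

lemma finite_grid: "finite (grid n m)"
proof -
  have "inj_on (\<lambda>f. restrict f {..n}) (grid n m)"
  proof (rule inj_onI)
    fix f g assume f: "f \<in> grid n m" and g: "g \<in> grid n m"
      and eq: "restrict f {..n} = restrict g {..n}"
    show "f = g"
    proof
      fix i show "f i = g i"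
        using fun_cong[OF eq, of i] f g by (cases "i \<le> n") (auto simp: grid_def)
    qed
  qed
  moreover have "(\<lambda>f. restrict f {..n}) ` grid n m \<subseteq> PiE {..n} (\<lambda>i. {..<m i})"
    by (auto simp: grid_def PiE_def extensional_def)
  ultimately show ?thesis
    by (meson finite_PiE finite_atMost finite_lessThan finite_imageD finite_subset)
qed

lemma grid_lower_coordinate:
  assumes "x \<in> grid n m" and "k \<le> x i"
  shows "x(i := k) \<in> grid n m"
  using assms by (auto simp: grid_def)

lemma cover_between_in:
  assumes "x \<in> cover P S" and "y \<in> P" and "s \<in> S" and "s \<le> y" and "y \<le> x" and "y \<noteq> x"
  shows "y \<in> S"
  using assms by (auto simp: cover_def minimals_def upset_def)

lemma cover_coordinate_above_maximal:
  assumes "finite S" and "convex_in P S" and x: "x \<in> cover P S"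
    and s: "s \<in> S" "s \<le> x" "s i < x i" and yP: "x(i := x i - 1) \<in> P"
  shows "\<exists>w\<in>maximals S. Suc (w i) = x i"
proof -
  define y where "y = x(i := x i - 1)"
  have "y i \<noteq> x i" using s(3) by (simp add: y_def)
  then have "y \<noteq> x" by auto
  moreover have "s \<le> y" "y \<le> x"
    using s(2,3) by (auto simp: y_def le_fun_def)
  ultimately have "y \<in> S" using cover_between_in[OF x] yP s(1) by (simp add: y_def)
  then obtain w where wS: "w \<in> S" and yw: "y \<le> w" and wmax: "\<forall>z\<in>S. w \<le> z \<longrightarrow> z = w"
    using finite_has_maximal2[OF \<open>finite S\<close>] by blast
  have "x \<notin> S" "x \<in> P" using x by (auto simp: cover_def minimals_def upset_def)
  have "w i = x i - 1"
  proof (rule ccontr)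
    assume "w i \<noteq> x i - 1"
    moreover have "x i - 1 \<le> w i" using le_funD[OF yw, of i] by (simp add: y_def)
    ultimately have "x i \<le> w i" by linarith
    moreover have "x j \<le> w j" if "j \<noteq> i" for j
      using yw that unfolding le_fun_def y_def by (metis fun_upd_other)
    ultimately have "x \<le> w" by (metis le_funI)
    then have "x \<in> S"
      using \<open>convex_in P S\<close> s wS \<open>x \<in> P\<close> unfolding convex_in_def by blast
    with \<open>x \<notin> S\<close> show False ..
  qed
  moreover have "w \<in> maximals S" using wS wmax by (auto simp: maximals_def)
  ultimately show ?thesis using s(3) by (intro bexI[of _ w]) auto
qed

lemma cover_coordinate_of_minimal:
  assumes "finite S" and x: "x \<in> cover P S" and below: "\<forall>s\<in>S. s \<le> x \<longrightarrow> x i \<le> s i"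
  shows "\<exists>t\<in>minimals S. t i = x i"
proof -
  obtain s where "s \<in> S" "s \<le> x" using x by (auto simp: cover_def minimals_def upset_def)
  then obtain t where tS: "t \<in> S" and "t \<le> x" and tmin: "\<forall>z\<in>S. z \<le> t \<longrightarrow> z = t"
    using finite_has_minimal2[OF \<open>finite S\<close>] order_trans by metis
  then have "t i = x i" using below by (simp add: le_fun_def order_antisym)
  moreover have "t \<in> minimals S" using tS tmin by (auto simp: minimals_def)
  ultimately show ?thesis by blast
qed

lemma spread_cover_time:
  assumes "spread (grid n m) S" and x: "x \<in> cover (grid n m) S"
  shows "x 0 \<in> (\<lambda>y. y 0) ` (minimals S \<union> plus_e0 m ` maximals S)"
proof -
  have "finite S" and convex: "convex_in (grid n m) S"
    using assms(1) finite_grid finite_subset by (auto simp: spread_def)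
  have xP: "x \<in> grid n m" using x by (simp add: cover_def minimals_def upset_def)
  then have "x 0 < m 0" by (simp add: grid_def)
  show ?thesis
  proof (cases "\<exists>s\<in>S. s \<le> x \<and> s 0 < x 0")
    case True
    then obtain s where "s \<in> S" "s \<le> x" "s 0 < x 0" by blast
    then obtain w where "w \<in> maximals S" "Suc (w 0) = x 0"
      using cover_coordinate_above_maximal[OF \<open>finite S\<close> convex x]
        grid_lower_coordinate[OF xP, of "x 0 - 1" 0] by auto
    moreover from this have "plus_e0 m w 0 = x 0" using \<open>x 0 < m 0\<close> by (simp add: plus_e0_def)
    ultimately show ?thesis by (metis UnI2 image_eqI)
  next
    case False
    then obtain t where "t \<in> minimals S" "t 0 = x 0"
      using cover_coordinate_of_minimal[OF \<open>finite S\<close> x] by (meson not_le)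
    then show ?thesis by (metis UnI1 image_eqI)
  qed
qed

theorem mainTheorem15:
  fixes n :: nat and m :: "nat \<Rightarrow> nat" and S :: "(nat \<Rightarrow> nat) set"
  defines "P \<equiv> grid n m"
  defines "A \<equiv> (\<lambda>y. y 0) ` (minimals S \<union> plus_e0 m ` maximals S)"
  assumes "spread P S"
  shows "(\<forall>x\<in>cover P S. x 0 \<in> A) \<and> minimals S \<union> cover P S \<subseteq> {p \<in> P. p 0 \<in> A}"
proof -
  have cover: "\<forall>x\<in>cover P S. x 0 \<in> A"
    using spread_cover_time assms(3) unfolding P_def A_def by blast
  have "minimals S \<subseteq> {p \<in> P. p 0 \<in> A}"
    using assms(3) unfolding A_def spread_def minimals_def by auto
  moreover have "cover P S \<subseteq> P" by (auto simp: cover_def minimals_def upset_def)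
  ultimately show ?thesis using cover by blast
qed

end
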